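(* Let $\mathbf{x}\in\mathbb{R}^p$ be a random vector with a joint density, and let $\Pi\in\{1,\dots,K\}$ be a random missingness-pattern label, with $\Pi=1$ meaning the case is complete (all coordinates observed) and $\Pi=k$ meaning the coordinates in $\mathbf{mis}(k)$ are missing and those in $\mathbf{obs}(k)$ are observed. Let $\mathbf{obs}=\bigcap_{k=1}^K\mathbf{obs}(k)\neq\varnothing$ and $\mathbf{mis}=\bigcup_{k=1}^K\mathbf{mis}(k)$, and assume the MAR condition: $\mathbf{x}_{\mathbf{mis}}$ is conditionally independent of $\Pi$ given $\mathbf{x}_{\mathbf{obs}}$. Let $P$ denote the distribution of $\mathbf{x}$ given $\Pi=1$ (the complete-case distribution), with density $\phi(\cdot\mid \Pi=1)$. Fix $k\in\{2,\dots,K\}$ and let $G_k$ be a generator which, given an input $\mathbf{x}$, an independent noise $\mathbf{z}\sim\mathcal{N}(0,\mathbf{I}_p)$ and the mask $\mathbf{m}_k$, outputs $\widehat{\mathbf{x}}=\mathbf{x}\odot\mathbf{m}_k+\widehat{G}_k(\mathbf{x}\odot\mathbf{m}_k+\mathbf{z}\odot(1-\mathbf{m}_k))\odot(1-\mathbf{m}_k)$, so that the imputed part $\widehat{\mathbf{x}}_{\mathbf{mis}(k)}$ has a conditional density $p_{\theta_k}(\cdot\mid\mathbf{x}_{\mathbf{obs}(k)})$ depending only on $\mathbf{x}_{\mathbf{obs}(k)}$. Let $P_k$ be the distribution of $\widehat{\mathbf{x}}$ when $\mathbf{x}\sim P$. Suppose $(G_2,D_2,\dots,G_K,D_K)$ is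 an optimal solution of the minimax problem $$\min_{G_2,\dots,G_K}\max_{D_2,\dots,D_K}\sum_{k=2}^K\Big(\mathbb{E}_{\widehat{\mathbf{x}}\sim P_k}[D_k(\widehat{\mathbf{x}})]-\mathbb{E}_{\mathbf{x}\sim P}[D_k(\mathbf{x})]\Big)$$ over 1-Lipschitz discriminators $D_k:\mathbb{R}^p\to\mathbb{R}$, in the sense that the optimal value is $0$, i.e. the Wasserstein-1 distance between $P$ and $P_k$ is zero, so $P_k=P$. Then for (almost) every $t_1$ in the support of the complete-case distribution of $\mathbf{x}_{\mathbf{obs}(k)}$ and every $t_2$, $$p_{\theta_k}(\widehat{\mathbf{x}}_{\mathbf{mis}(k)}=t_2\mid \mathbf{x}_{\mathbf{obs}(k)}=t_1)=f(\mathbf{x}_{\mathbf{mis}(k)}=t_2\mid\mathbf{x}_{\mathbf{obs}(k)}=t_1),$$ i.e. $G_k$ learns the true conditional distribution of the missing variables of pattern $k$ given its observed variables.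
   Context: Data consist of $p$ variables; cases are grouped into $K$ missingness patterns. For pattern $k$, $\mathbf{obs}(k)\subseteq\{1,\dots,p\}$ is the index set of observed variables and $\mathbf{mis}(k)$ its complement; pattern $1$ has $\mathbf{obs}(1)=\{1,\dots,p\}$. The mask vector $\mathbf{m}_k\in\{0,1\}^p$ has $\mathbf{m}_k(j)=1$ iff $j\in\mathbf{obs}(k)$; $\odot$ is elementwise multiplication; $\widehat{G}_k:\mathbb{R}^p\to\mathbb{R}^p$ is the generator network. For an index set $S$, $\mathbf{x}_S$ is the subvector of $\mathbf{x}$ on $S$. $f(\mathbf{x}_{\mathbf{mis}(k)}\mid\mathbf{x}_{\mathbf{obs}(k)})$ denotes the true conditional density of $\mathbf{x}_{\mathbf{mis}(k)}$ given $\mathbf{x}_{\mathbf{obs}(k)}$ in the full (not pattern-conditioned) data distribution. *)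

theory Defs
  imports "HOL-Probability.Probability"
begin

text \<open>For an index set S, the subvector x_S is restrict x S, living in the product space
  Leb S (Lebesgue measure on R^S).\<close>

definition Leb :: "'i set \<Rightarrow> ('i \<Rightarrow> real) measure" where
  "Leb S = PiM S (\<lambda>_. lborel)"

definition mask :: "'i set \<Rightarrow> 'i \<Rightarrow> real" where
  "mask Obs j = (if j \<in> Obs then 1 else 0)"

definition std_gauss :: "('i \<Rightarrow> real) measure" where
  "std_gauss = PiM UNIV (\<lambda>_. density lborel (\<lambda>x. ennreal (std_normal_density x)))"

definition gen_out :: "(('i \<Rightarrow> real) \<Rightarrow> ('i \<Rightarrow> real)) \<Rightarrow> ('i \<Rightarrow> real)
    \<Rightarrow> ('i \<Rightarrow> real) \<Rightarrow> ('i \<Rightarrow> real) \<Rightarrow> ('i \<Rightarrow> real)" where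
  "gen_out Ghat m x z =
     (\<lambda>j. x j * m j + Ghat (\<lambda>i. x i * m i + z i * (1 - m i)) j * (1 - m j))"

definition marg :: "'i set \<Rightarrow> (('i \<Rightarrow> real) \<Rightarrow> real) \<Rightarrow> ('i \<Rightarrow> real) \<Rightarrow> real" where
  "marg S g t1 = (\<integral>w. g (merge S (- S) (t1, w)) \<partial>Leb (- S))"

definition cond_dens :: "'i set \<Rightarrow> (('i \<Rightarrow> real) \<Rightarrow> real) \<Rightarrow> ('i \<Rightarrow> real) \<Rightarrow> ('i \<Rightarrow> real) \<Rightarrow> real" where
  "cond_dens S g t1 t2 = g (merge S (- S) (t1, t2)) / marg S g t1"

text \<open>MAR: x_mis is conditionally independent of the pattern label given x_obs, where
  phi j is the joint density of (x, Pi = j) and f = sum_j phi j is the density of x.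
  In density form: f(x_mis, Pi=j | x_obs) = f(x_mis | x_obs) * P(Pi=j | x_obs), i.e.
  phi_j(x) f_obs(x_obs) = f(x) phi_{j,obs}(x_obs) for a.e. x, for every j.\<close>
definition MAR :: "nat \<Rightarrow> 'i set \<Rightarrow> (nat \<Rightarrow> ('i \<Rightarrow> real) \<Rightarrow> real) \<Rightarrow> bool" where
  "MAR K Ob \<phi> \<longleftrightarrow>
     (\<forall>j\<in>{1..K}. AE x in Leb UNIV.
        \<phi> j x * marg Ob (\<lambda>y. \<Sum>i\<in>{1..K}. \<phi> i y) (restrict x Ob)
        = (\<Sum>i\<in>{1..K}. \<phi> i x) * marg Ob (\<phi> j) (restrict x Ob))"

end

theory Submission
  imports Defs
begin

text \<open>Split the coordinates into the observed part \<open>t1 = x_S\<close> of pattern \<open>k\<close> (\<open>S = obs k\<close>) and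
  the rest \<open>t2\<close>. Since the generator keeps \<open>x_S\<close> and draws the rest from \<open>q t1\<close>, its output
  distribution on complete cases has density \<open>m t1 * q t1 t2\<close>, where \<open>m t1 = \<integral> \<phi>\<^sub>1 (t1, u) du\<close>,
  while the complete-case distribution has density \<open>\<phi>\<^sub>1 (t1, t2)\<close>. Optimality makes the two
  distributions equal, so the densities agree a.e. and \<open>q t1\<close> is the conditional density of
  \<open>\<phi>\<^sub>1\<close> wherever \<open>m t1 > 0\<close>. MAR says that \<open>\<phi>\<^sub>1\<close> is a.e. proportional to the full density
  \<open>F = \<Sum>j. \<phi>\<^sub>j\<close>, with a factor depending on \<open>x_Ob\<close> only (\<open>Ob \<subseteq> S\<close>); the factor is well defined
  where \<open>m t1 > 0\<close> because the marginal of \<open>F\<close> on \<open>Ob\<close> vanishes only on an \<open>F\<close>-null set. Proportional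
  densities have the same conditional density.\<close>

interpretation lborel_product: product_sigma_finite "\<lambda>_::'i. lborel"
  by (simp add: product_sigma_finite_def lborel.sigma_finite_measure_axioms)

lemma sigma_finite_Leb: "sigma_finite_measure (Leb (S::'i::finite set))"
  unfolding Leb_def by (rule lborel_product.sigma_finite) simp

lemma space_Leb: "space (Leb S) = (\<Pi>\<^sub>E i\<in>S. UNIV)"
  unfolding Leb_def by (simp add: space_PiM)

lemma restrict_in_space_Leb [simp]: "restrict x S \<in> space (Leb S)"
  by (simp add: space_Leb)

lemma restrict_space_Leb: "a \<in> space (Leb S) \<Longrightarrow> restrict a S = a"
  by (auto simp: space_Leb fun_eq_iff PiE_def extensional_def)

lemma restrict_merge_subset: "T \<subseteq> S \<Longrightarrow> restrict (merge S (-S) (t1, t2)) T = restrict t1 T"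
  by (auto simp: merge_def fun_eq_iff)

lemma measurable_restrict_Leb: "T \<subseteq> S \<Longrightarrow> (\<lambda>x. restrict x T) \<in> Leb S \<rightarrow>\<^sub>M Leb T"
  unfolding Leb_def by (rule measurable_restrict_subset)

lemma measurable_merge_Leb [measurable]:
  "merge S (-S) \<in> Leb S \<Otimes>\<^sub>M Leb (-S) \<rightarrow>\<^sub>M Leb (UNIV::'i::finite set)"
  using measurable_merge[of S "-S" "\<lambda>_. lborel"] unfolding Leb_def by simp

lemma distr_merge_Leb:
  "distr (Leb S \<Otimes>\<^sub>M Leb (-S)) (Leb UNIV) (merge S (-S)) = Leb (UNIV::'i::finite set)"
  using lborel_product.distr_merge[of S "-S"] unfolding Leb_def by simp

definition unmerge :: "'i set \<Rightarrow> ('i \<Rightarrow> real) \<Rightarrow> ('i \<Rightarrow> real) \<times> ('i \<Rightarrow> real)" where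
  "unmerge S x = (restrict x S, restrict x (-S))"

lemma measurable_unmerge [measurable]:
  "unmerge S \<in> Leb UNIV \<rightarrow>\<^sub>M Leb S \<Otimes>\<^sub>M Leb (-S)"
  unfolding unmerge_def by (auto intro!: measurable_Pair measurable_restrict_Leb)

lemma unmerge_merge: "w \<in> space (Leb S \<Otimes>\<^sub>M Leb (-S)) \<Longrightarrow> unmerge S (merge S (-S) w) = w"
  by (cases w) (auto simp: unmerge_def space_pair_measure space_Leb merge_def fun_eq_iff PiE_def extensional_def)

lemma nn_integral_Leb_split:
  fixes f :: "('i::finite \<Rightarrow> real) \<Rightarrow> ennreal"
  assumes "f \<in> borel_measurable (Leb UNIV)"
  shows "(\<integral>\<^sup>+ x. f x \<partial>Leb UNIV) = (\<integral>\<^sup>+ w. f (merge S (-S) w) \<partial>(Leb S \<Otimes>\<^sub>M Leb (-S)))"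
  using assms by (subst distr_merge_Leb[symmetric, of S]) (simp add: nn_integral_distr)

lemma nn_integral_Leb_fold:
  fixes f :: "('i::finite \<Rightarrow> real) \<Rightarrow> ennreal"
  assumes "f \<in> borel_measurable (Leb UNIV)"
  shows "(\<integral>\<^sup>+ x. f x \<partial>Leb UNIV) = (\<integral>\<^sup>+ t1. (\<integral>\<^sup>+ t2. f (merge S (-S) (t1, t2)) \<partial>Leb (-S)) \<partial>Leb S)"
  using lborel_product.product_nn_integral_fold[of S "-S" f] assms unfolding Leb_def by simp

lemma AE_Leb_split:
  fixes S :: "'i::finite set"
  assumes "AE x in Leb UNIV. P x"
  shows "AE t1 in Leb S. AE t2 in Leb (-S). P (merge S (-S) (t1, t2))"
proof -
  interpret pair_sigma_finite "Leb S" "Leb (-S)"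
    by (simp add: pair_sigma_finite_def sigma_finite_Leb)
  have "AE w in Leb S \<Otimes>\<^sub>M Leb (-S). P (merge S (-S) w)"
    using assms by (intro AE_distrD[OF measurable_merge_Leb]) (simp only: distr_merge_Leb)
  then show ?thesis by (auto dest: AE_pair)
qed

lemma measurable_Leb_section:
  fixes S :: "'i::finite set"
  assumes "f \<in> borel_measurable (Leb UNIV)" and "t1 \<in> space (Leb S)"
  shows "(\<lambda>t2. f (merge S (-S) (t1, t2))) \<in> borel_measurable (Leb (-S))"
  using measurable_compose[OF measurable_Pair1'[OF assms(2)] measurable_compose[OF measurable_merge_Leb assms(1)]]
  by simp

lemma measurable_Leb_section_integral:
  fixes S :: "'i::finite set" and f :: "('i \<Rightarrow> real) \<Rightarrow> ennreal"
  assumes "f \<in> borel_measurable (Leb UNIV)"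
  shows "(\<lambda>t1. \<integral>\<^sup>+ t2. f (merge S (-S) (t1, t2)) \<partial>Leb (-S)) \<in> borel_measurable (Leb S)"
proof -
  interpret sigma_finite_measure "Leb (-S)" by (rule sigma_finite_Leb)
  show ?thesis
    using assms by (intro borel_measurable_nn_integral) (simp add: case_prod_beta')
qed

lemma marg_eq_enn2real:
  fixes S :: "'i::finite set"
  assumes "f \<in> borel_measurable (Leb UNIV)" and "\<And>x. f x \<ge> 0" and "t1 \<in> space (Leb S)"
  shows "marg S f t1 = enn2real (\<integral>\<^sup>+ t2. ennreal (f (merge S (-S) (t1, t2))) \<partial>Leb (-S))"
  unfolding marg_def using assms
  by (intro integral_eq_nn_integral measurable_Leb_section) auto

lemma distr_density_unmerge:
  fixes f :: "('i::finite \<Rightarrow> real) \<Rightarrow> ennreal"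
  assumes [measurable]: "f \<in> borel_measurable (Leb UNIV)"
  shows "distr (density (Leb UNIV) f) (Leb S \<Otimes>\<^sub>M Leb (-S)) (unmerge S)
       = density (Leb S \<Otimes>\<^sub>M Leb (-S)) (\<lambda>w. f (merge S (-S) w))"
proof -
  let ?LL = "Leb S \<Otimes>\<^sub>M Leb (-S)"
  have "density (Leb UNIV) f = distr (density ?LL (\<lambda>w. f (merge S (-S) w))) (Leb UNIV) (merge S (-S))"
    by (subst distr_merge_Leb[symmetric, of S]) (simp add: density_distr)
  then have "distr (density (Leb UNIV) f) ?LL (unmerge S)
      = distr (density ?LL (\<lambda>w. f (merge S (-S) w))) ?LL (\<lambda>w. unmerge S (merge S (-S) w))"
    by (simp add: distr_distr comp_def)
  also have "\<dots> = distr (density ?LL (\<lambda>w. f (merge S (-S) w))) ?LL (\<lambda>w. w)"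
    by (rule distr_cong) (simp_all add: unmerge_merge)
  also have "\<dots> = density ?LL (\<lambda>w. f (merge S (-S) w))"
    by (rule distr_id2) simp
  finally show ?thesis .
qed

lemma restrict_gen_out_mask: "restrict (gen_out Ghat (mask S) x z) S = restrict x S"
  by (auto simp: gen_out_def mask_def fun_eq_iff)

lemma measurable_Leb_UNIV_coordinatewise:
  assumes "\<And>j. (\<lambda>w. f w j) \<in> borel_measurable N"
  shows "f \<in> N \<rightarrow>\<^sub>M Leb (UNIV::'i::finite set)"
  using measurable_PiM_single'[of UNIV "\<lambda>j w. f w j" N "\<lambda>_. lborel"] assms
  unfolding Leb_def by simp

lemma measurable_gen_out [measurable]:
  fixes Ghat :: "('i::finite \<Rightarrow> real) \<Rightarrow> ('i \<Rightarrow> real)"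
  assumes [measurable]: "Ghat \<in> Leb UNIV \<rightarrow>\<^sub>M Leb UNIV"
  shows "(\<lambda>(x, z). gen_out Ghat m x z) \<in> Leb UNIV \<Otimes>\<^sub>M Leb UNIV \<rightarrow>\<^sub>M Leb UNIV"
proof -
  have coord [measurable]: "(\<lambda>x. x j) \<in> Leb UNIV \<rightarrow>\<^sub>M lborel" for j :: 'i
    unfolding Leb_def by measurable
  have [measurable]: "(\<lambda>w. fst w j) \<in> borel_measurable (Leb UNIV \<Otimes>\<^sub>M Leb UNIV)"
    "(\<lambda>w. snd w j) \<in> borel_measurable (Leb UNIV \<Otimes>\<^sub>M Leb UNIV)" for j :: 'i
    using measurable_compose[OF measurable_fst coord] measurable_compose[OF measurable_snd coord] by simp_all
  have input [measurable]:
    "(\<lambda>w i. fst w i * m i + snd w i * (1 - m i)) \<in> Leb UNIV \<Otimes>\<^sub>M Leb UNIV \<rightarrow>\<^sub>M Leb UNIV"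
    by (rule measurable_Leb_UNIV_coordinatewise) measurable
  have [measurable]: "(\<lambda>w. Ghat (\<lambda>i. fst w i * m i + snd w i * (1 - m i)) j)
      \<in> borel_measurable (Leb UNIV \<Otimes>\<^sub>M Leb UNIV)" for j
    using measurable_compose[OF measurable_compose[OF input assms] coord] by simp
  show ?thesis
    unfolding gen_out_def case_prod_beta' by (rule measurable_Leb_UNIV_coordinatewise) measurable
qed

lemma nn_integral_gen_out_unmerge:
  fixes g :: "('i::finite \<Rightarrow> real) \<times> ('i \<Rightarrow> real) \<Rightarrow> ennreal"
  assumes g [measurable]: "g \<in> borel_measurable (Leb S \<Otimes>\<^sub>M Leb (-S))"
    and sets_G: "sets G = sets (Leb UNIV)"
    and Ghat [measurable]: "Ghat \<in> Leb UNIV \<rightarrow>\<^sub>M Leb UNIV"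
    and q_cond: "distr G (Leb (-S)) (\<lambda>z. restrict (gen_out Ghat (mask S) x z) (-S))
                 = density (Leb (-S)) (\<lambda>t2. ennreal (q (restrict x S) t2))"
    and q_sec [measurable]: "(\<lambda>t2. q (restrict x S) t2) \<in> borel_measurable (Leb (-S))"
  shows "(\<integral>\<^sup>+ z. g (unmerge S (gen_out Ghat (mask S) x z)) \<partial>G)
       = (\<integral>\<^sup>+ t2. ennreal (q (restrict x S) t2) * g (restrict x S, t2) \<partial>Leb (-S))"
proof -
  have gen_mis: "(\<lambda>z. restrict (gen_out Ghat (mask S) x z) (-S)) \<in> G \<rightarrow>\<^sub>M Leb (-S)"
    using measurable_compose[OF measurable_Pair2[OF measurable_gen_out[OF Ghat], of x]
        measurable_restrict_Leb[of "-S" UNIV]]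
    by (subst measurable_cong_sets[OF sets_G refl]) (simp add: space_Leb)
  have g_sec [measurable]: "(\<lambda>t2. g (restrict x S, t2)) \<in> borel_measurable (Leb (-S))"
    by (rule measurable_compose[OF measurable_Pair1'[OF restrict_in_space_Leb] g])
  have "(\<integral>\<^sup>+ z. g (unmerge S (gen_out Ghat (mask S) x z)) \<partial>G)
      = (\<integral>\<^sup>+ z. g (restrict x S, restrict (gen_out Ghat (mask S) x z) (-S)) \<partial>G)"
    by (simp add: unmerge_def restrict_gen_out_mask)
  also have "\<dots> = (\<integral>\<^sup>+ t2. g (restrict x S, t2)
      \<partial>distr G (Leb (-S)) (\<lambda>z. restrict (gen_out Ghat (mask S) x z) (-S)))"
    using gen_mis by (subst nn_integral_distr) simp_all
  also have "\<dots> = (\<integral>\<^sup>+ t2. ennreal (q (restrict x S) t2) * g (restrict x S, t2) \<partial>Leb (-S))"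
    unfolding q_cond by (rule nn_integral_density) measurable
  finally show ?thesis .
qed

lemma distr_gen_out_unmerge:
  fixes f :: "('i::finite \<Rightarrow> real) \<Rightarrow> ennreal" and S :: "'i set"
  assumes f [measurable]: "f \<in> borel_measurable (Leb UNIV)"
    and G: "prob_space G" and sets_G: "sets G = sets (Leb UNIV)"
    and Ghat [measurable]: "Ghat \<in> Leb UNIV \<rightarrow>\<^sub>M Leb UNIV"
    and q_meas [measurable]: "(\<lambda>(t1, t2). q t1 t2) \<in> borel_measurable (Leb S \<Otimes>\<^sub>M Leb (-S))"
    and q_cond: "\<And>x. distr G (Leb (-S)) (\<lambda>z. restrict (gen_out Ghat (mask S) x z) (-S))
                       = density (Leb (-S)) (\<lambda>t2. ennreal (q (restrict x S) t2))"
  shows "distr (distr (density (Leb UNIV) f \<Otimes>\<^sub>M G) (Leb UNIV) (\<lambda>(x, z). gen_out Ghat (mask S) x z))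
            (Leb S \<Otimes>\<^sub>M Leb (-S)) (unmerge S)
       = density (Leb S \<Otimes>\<^sub>M Leb (-S))
            (\<lambda>(t1, t2). (\<integral>\<^sup>+ u. f (merge S (-S) (t1, u)) \<partial>Leb (-S)) * ennreal (q t1 t2))"
    (is "distr (distr ?PG _ ?gen) ?LL _ = density ?LL ?g")
proof -
  interpret G: prob_space G by (rule G)
  interpret LS: sigma_finite_measure "Leb S" by (rule sigma_finite_Leb)
  interpret LN: sigma_finite_measure "Leb (-S)" by (rule sigma_finite_Leb)
  define mf where "mf t1 = (\<integral>\<^sup>+ u. f (merge S (-S) (t1, u)) \<partial>Leb (-S))" for t1
  have mf [measurable]: "mf \<in> borel_measurable (Leb S)"
    unfolding mf_def by (rule measurable_Leb_section_integral) measurable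
  have gen [measurable]: "?gen \<in> ?PG \<rightarrow>\<^sub>M Leb UNIV"
    using measurable_gen_out[OF Ghat]
    by (subst measurable_cong_sets[OF sets_pair_measure_cong[OF sets_density sets_G] refl]) simp
  have q_sec [measurable]: "(\<lambda>t2. q t1 t2) \<in> borel_measurable (Leb (-S))"
    if "t1 \<in> space (Leb S)" for t1
    using measurable_compose[OF measurable_Pair1'[OF that] q_meas] by simp
  show ?thesis
  proof (rule measure_eqI)
    fix T assume "T \<in> sets (distr (distr ?PG (Leb UNIV) ?gen) ?LL (unmerge S))"
    then have T [measurable]: "T \<in> sets ?LL" by simp
    define H where "H t1 = (\<integral>\<^sup>+ t2. ennreal (q t1 t2) * indicator T (t1, t2) \<partial>Leb (-S))" for t1
    have H [measurable]: "H \<in> borel_measurable (Leb S)"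
      unfolding H_def by (rule LN.borel_measurable_nn_integral) (simp add: case_prod_beta')
    have "emeasure (distr (distr ?PG (Leb UNIV) ?gen) ?LL (unmerge S)) T
        = (\<integral>\<^sup>+ w. indicator T w \<partial>distr ?PG ?LL (unmerge S \<circ> ?gen))"
      by (simp add: distr_distr)
    also have "\<dots> = (\<integral>\<^sup>+ w. indicator T (unmerge S (?gen w)) \<partial>?PG)"
      by (subst nn_integral_distr) simp_all
    also have "\<dots> = (\<integral>\<^sup>+ x. \<integral>\<^sup>+ z. indicator T (unmerge S (gen_out Ghat (mask S) x z)) \<partial>G
        \<partial>density (Leb UNIV) f)"
      by (subst G.nn_integral_fst[symmetric]) (simp_all add: case_prod_beta')
    also have "\<dots> = (\<integral>\<^sup>+ x. H (restrict x S) \<partial>density (Leb UNIV) f)"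
      unfolding H_def
      by (intro nn_integral_cong nn_integral_gen_out_unmerge sets_G Ghat q_cond q_sec restrict_in_space_Leb)
         simp_all
    also have "\<dots> = (\<integral>\<^sup>+ x. f x * H (restrict x S) \<partial>Leb UNIV)"
      using measurable_compose[OF measurable_restrict_Leb H] by (intro nn_integral_density) simp_all
    also have "\<dots> = (\<integral>\<^sup>+ t1. \<integral>\<^sup>+ t2. f (merge S (-S) (t1, t2)) * H (restrict (merge S (-S) (t1, t2)) S)
        \<partial>Leb (-S) \<partial>Leb S)"
      using measurable_compose[OF measurable_restrict_Leb H] by (intro nn_integral_Leb_fold) simp
    also have "\<dots> = (\<integral>\<^sup>+ t1. \<integral>\<^sup>+ t2. f (merge S (-S) (t1, t2)) * H t1 \<partial>Leb (-S) \<partial>Leb S)"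
      by (intro nn_integral_cong) (simp add: restrict_merge_subset restrict_space_Leb)
    also have "\<dots> = (\<integral>\<^sup>+ t1. mf t1 * H t1 \<partial>Leb S)"
      unfolding mf_def by (intro nn_integral_cong nn_integral_multc measurable_Leb_section f) simp
    also have "\<dots> = (\<integral>\<^sup>+ t1. \<integral>\<^sup>+ t2. mf t1 * (ennreal (q t1 t2) * indicator T (t1, t2))
        \<partial>Leb (-S) \<partial>Leb S)"
      unfolding H_def by (intro nn_integral_cong nn_integral_cmult[symmetric]) simp
    also have "\<dots> = emeasure (density ?LL ?g) T"
      by (simp add: emeasure_density LN.nn_integral_fst[symmetric] mf_def case_prod_beta' mult.assoc)
    finally show "emeasure (distr (distr ?PG (Leb UNIV) ?gen) ?LL (unmerge S)) T
        = emeasure (density ?LL ?g) T" .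
  qed simp
qed

lemma gen_out_invariant_imp_AE_section_density:
  fixes f :: "('i::finite \<Rightarrow> real) \<Rightarrow> ennreal" and S :: "'i set"
  assumes f [measurable]: "f \<in> borel_measurable (Leb UNIV)"
    and finite: "(\<integral>\<^sup>+ x. f x \<partial>Leb UNIV) \<noteq> \<infinity>"
    and G: "prob_space G" and sets_G: "sets G = sets (Leb UNIV)"
    and Ghat: "Ghat \<in> Leb UNIV \<rightarrow>\<^sub>M Leb UNIV"
    and q_meas [measurable]: "(\<lambda>(t1, t2). q t1 t2) \<in> borel_measurable (Leb S \<Otimes>\<^sub>M Leb (-S))"
    and q_cond: "\<And>x. distr G (Leb (-S)) (\<lambda>z. restrict (gen_out Ghat (mask S) x z) (-S))
                       = density (Leb (-S)) (\<lambda>t2. ennreal (q (restrict x S) t2))"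
    and invariant: "distr (density (Leb UNIV) f \<Otimes>\<^sub>M G) (Leb UNIV) (\<lambda>(x, z). gen_out Ghat (mask S) x z)
                    = density (Leb UNIV) f"
  shows "AE w in Leb S \<Otimes>\<^sub>M Leb (-S).
           (\<integral>\<^sup>+ u. f (merge S (-S) (fst w, u)) \<partial>Leb (-S)) * ennreal (q (fst w) (snd w))
             = f (merge S (-S) w)"
proof -
  let ?LL = "Leb S \<Otimes>\<^sub>M Leb (-S)"
  interpret LN: sigma_finite_measure "Leb (-S)" by (rule sigma_finite_Leb)
  have "density ?LL (\<lambda>w. f (merge S (-S) w))
      = density ?LL (\<lambda>(t1, t2). (\<integral>\<^sup>+ u. f (merge S (-S) (t1, u)) \<partial>Leb (-S)) * ennreal (q t1 t2))"
    using distr_density_unmerge[OF f, of S] distr_gen_out_unmerge[OF f G sets_G Ghat q_meas q_cond]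
    by (simp add: invariant)
  moreover have "(\<integral>\<^sup>+ w. f (merge S (-S) w) \<partial>?LL) \<noteq> \<infinity>"
    using finite by (simp add: nn_integral_Leb_split[OF f, of S])
  ultimately have "AE w in ?LL. f (merge S (-S) w)
      = (\<integral>\<^sup>+ u. f (merge S (-S) (fst w, u)) \<partial>Leb (-S)) * ennreal (q (fst w) (snd w))"
    by (subst (asm) finite_density_unique)
       (simp_all add: case_prod_beta' measurable_Leb_section_integral[OF f, THEN measurable_fst''])
  then show ?thesis by (simp add: eq_commute)
qed

lemma gen_out_invariant_imp_cond_dens:
  fixes h :: "('i::finite \<Rightarrow> real) \<Rightarrow> real" and S :: "'i set" and c :: ennreal
  assumes h [measurable]: "h \<in> borel_measurable (Leb UNIV)" and h_nonneg: "\<And>x. h x \<ge> 0"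
    and finite: "(\<integral>\<^sup>+ x. ennreal (h x) \<partial>Leb UNIV) \<noteq> \<infinity>"
    and c: "c \<noteq> 0" "c \<noteq> \<infinity>"
    and G: "prob_space G" and sets_G: "sets G = sets (Leb UNIV)"
    and Ghat: "Ghat \<in> Leb UNIV \<rightarrow>\<^sub>M Leb UNIV"
    and q_meas: "(\<lambda>(t1, t2). q t1 t2) \<in> borel_measurable (Leb S \<Otimes>\<^sub>M Leb (-S))"
    and q_nonneg: "\<And>t1 t2. q t1 t2 \<ge> 0"
    and q_cond: "\<And>x. distr G (Leb (-S)) (\<lambda>z. restrict (gen_out Ghat (mask S) x z) (-S))
                       = density (Leb (-S)) (\<lambda>t2. ennreal (q (restrict x S) t2))"
    and invariant: "distr (density (Leb UNIV) (\<lambda>x. ennreal (h x) * c) \<Otimes>\<^sub>M G) (Leb UNIV)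
                      (\<lambda>(x, z). gen_out Ghat (mask S) x z)
                    = density (Leb UNIV) (\<lambda>x. ennreal (h x) * c)"
  shows "AE t1 in Leb S. marg S h t1 > 0 \<longrightarrow> (AE t2 in Leb (-S). q t1 t2 = cond_dens S h t1 t2)"
proof -
  interpret pair_sigma_finite "Leb S" "Leb (-S)"
    by (simp add: pair_sigma_finite_def sigma_finite_Leb)
  define mh where "mh t1 = (\<integral>\<^sup>+ u. ennreal (h (merge S (-S) (t1, u))) \<partial>Leb (-S))" for t1
  have hc: "(\<lambda>x. ennreal (h x) * c) \<in> borel_measurable (Leb UNIV)" by simp
  have hc_finite: "(\<integral>\<^sup>+ x. ennreal (h x) * c \<partial>Leb UNIV) \<noteq> \<infinity>"
    using finite c by (simp add: nn_integral_multc ennreal_mult_eq_top_iff)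
  from gen_out_invariant_imp_AE_section_density[OF hc hc_finite G sets_G Ghat q_meas q_cond invariant]
    AE_space
  have "AE w in Leb S \<Otimes>\<^sub>M Leb (-S).
      mh (fst w) * ennreal (q (fst w) (snd w)) = ennreal (h (merge S (-S) w))"
  proof eventually_elim
    case (elim w)
    then have "fst w \<in> space (Leb S)" by (auto simp: space_pair_measure)
    then have "(\<integral>\<^sup>+ u. ennreal (h (merge S (-S) (fst w, u))) * c \<partial>Leb (-S)) = mh (fst w) * c"
      unfolding mh_def by (intro nn_integral_multc) (simp add: measurable_Leb_section)
    with elim(1)
    have "(mh (fst w) * ennreal (q (fst w) (snd w))) * c = ennreal (h (merge S (-S) w)) * c"
      by (simp add: mult_ac)
    then show ?case by (metis c mult_divide_eq_ennreal infinity_ennreal_def)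
  qed
  then have "AE t1 in Leb S. AE t2 in Leb (-S).
      mh t1 * ennreal (q t1 t2) = ennreal (h (merge S (-S) (t1, t2)))"
    by (auto dest: AE_pair)
  with AE_space show ?thesis
  proof eventually_elim
    case (elim t1)
    show ?case
    proof
      assume pos: "marg S h t1 > 0"
      have mh_eq: "mh t1 = ennreal (marg S h t1)"
        using pos marg_eq_enn2real[OF h h_nonneg elim(1)] unfolding mh_def
        by (cases "mh t1") (auto simp: mh_def)
      from elim(2) show "AE t2 in Leb (-S). q t1 t2 = cond_dens S h t1 t2"
      proof eventually_elim
        case (elim t2)
        then have "marg S h t1 * q t1 t2 = h (merge S (-S) (t1, t2))"
          using mh_eq pos q_nonneg h_nonneg by (simp add: ennreal_mult[symmetric])
        then show ?case
          using pos unfolding cond_dens_def by (simp add: field_simps)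
      qed
    qed
  qed
qed

lemma nn_integral_Leb_fold_restrict_indicator:
  fixes f :: "('i::finite \<Rightarrow> real) \<Rightarrow> ennreal"
  assumes f [measurable]: "f \<in> borel_measurable (Leb UNIV)"
    and "T \<subseteq> S" and A [measurable]: "A \<in> sets (Leb T)"
  shows "(\<integral>\<^sup>+ x. f x * indicator A (restrict x T) \<partial>Leb UNIV)
       = (\<integral>\<^sup>+ t1. (\<integral>\<^sup>+ t2. f (merge S (-S) (t1, t2)) \<partial>Leb (-S)) * indicator A (restrict t1 T) \<partial>Leb S)"
proof -
  have [measurable]: "(\<lambda>x. restrict x T) \<in> Leb UNIV \<rightarrow>\<^sub>M Leb T"
    by (rule measurable_restrict_Leb) simp
  have "(\<integral>\<^sup>+ x. f x * indicator A (restrict x T) \<partial>Leb UNIV)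
      = (\<integral>\<^sup>+ t1. \<integral>\<^sup>+ t2. f (merge S (-S) (t1, t2)) * indicator A (restrict t1 T)
          \<partial>Leb (-S) \<partial>Leb S)"
    by (subst nn_integral_Leb_fold[of _ S]) (simp_all add: restrict_merge_subset[OF \<open>T \<subseteq> S\<close>])
  also have "\<dots> = (\<integral>\<^sup>+ t1. (\<integral>\<^sup>+ t2. f (merge S (-S) (t1, t2)) \<partial>Leb (-S)) * indicator A (restrict t1 T)
      \<partial>Leb S)"
    by (intro nn_integral_cong nn_integral_multc measurable_Leb_section f)
  finally show ?thesis .
qed

lemma AE_marg_zero_imp_section_integral_zero:
  fixes F :: "('i::finite \<Rightarrow> real) \<Rightarrow> real" and Ob S :: "'i set"
  assumes F [measurable]: "F \<in> borel_measurable (Leb UNIV)" and F_nonneg: "\<And>x. F x \<ge> 0"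
    and finite: "(\<integral>\<^sup>+ x. ennreal (F x) \<partial>Leb UNIV) \<noteq> \<infinity>" and "Ob \<subseteq> S"
  shows "AE t1 in Leb S. marg Ob F (restrict t1 Ob) = 0 \<longrightarrow>
           (\<integral>\<^sup>+ t2. ennreal (F (merge S (-S) (t1, t2))) \<partial>Leb (-S)) = 0"
proof -
  define mF where "mF T t1 = (\<integral>\<^sup>+ t2. ennreal (F (merge T (-T) (t1, t2))) \<partial>Leb (-T))" for T t1
  have mF [measurable]: "mF T \<in> borel_measurable (Leb T)" for T
    unfolding mF_def by (rule measurable_Leb_section_integral) simp
  define Z where "Z = {s \<in> space (Leb Ob). enn2real (mF Ob s) = 0}"
  have Z [measurable]: "Z \<in> sets (Leb Ob)" unfolding Z_def by measurable
  have Z_iff: "restrict t1 Ob \<in> Z \<longleftrightarrow> marg Ob F (restrict t1 Ob) = 0" for t1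
    by (simp add: Z_def mF_def marg_eq_enn2real[OF F F_nonneg])
  \<comment> \<open>Integrating out \<open>-Ob\<close> shows that \<open>F\<close> has no mass over \<open>{x. x_Ob \<in> Z}\<close>, since the section
      integral is a.e. finite and \<open>enn2real\<close> maps only \<open>0\<close> and \<open>\<infinity>\<close> to \<open>0\<close>; integrating out \<open>-S\<close>
      instead turns this into the claim.\<close>
  have "(\<integral>\<^sup>+ s. mF Ob s \<partial>Leb Ob) \<noteq> \<infinity>"
    using finite by (simp add: mF_def nn_integral_Leb_fold[of _ Ob])
  then have "AE s in Leb Ob. mF Ob s \<noteq> \<infinity>" by (intro nn_integral_PInf_AE) simp_all
  then have "AE s in Leb Ob. mF Ob s * indicator Z s = 0"
    by eventually_elim (auto simp: Z_def indicator_def enn2real_eq_0_iff)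
  then have "(\<integral>\<^sup>+ x. ennreal (F x) * indicator Z (restrict x Ob) \<partial>Leb UNIV) = 0"
    by (simp add: nn_integral_Leb_fold_restrict_indicator[of _ Ob Ob] restrict_space_Leb
        mF_def[symmetric] nn_integral_0_iff_AE cong: nn_integral_cong)
  then have "(\<integral>\<^sup>+ t1. mF S t1 * indicator Z (restrict t1 Ob) \<partial>Leb S) = 0"
    using \<open>Ob \<subseteq> S\<close>
    by (simp add: nn_integral_Leb_fold_restrict_indicator[of _ Ob S] mF_def[symmetric])
  moreover have "(\<lambda>t1. restrict t1 Ob) \<in> Leb S \<rightarrow>\<^sub>M Leb Ob"
    using \<open>Ob \<subseteq> S\<close> by (rule measurable_restrict_Leb)
  ultimately have "AE t1 in Leb S. mF S t1 * indicator Z (restrict t1 Ob) = 0"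
    by (subst (asm) nn_integral_0_iff_AE) simp_all
  then show ?thesis
    by eventually_elim (auto simp: Z_iff[symmetric] mF_def)
qed

lemma cond_dens_eq_of_AE_section_proportional:
  fixes g F :: "('i::finite \<Rightarrow> real) \<Rightarrow> real" and S :: "'i set"
  assumes g: "g \<in> borel_measurable (Leb UNIV)" and F: "F \<in> borel_measurable (Leb UNIV)"
    and t1: "t1 \<in> space (Leb S)"
    and proportional: "AE t2 in Leb (-S). g (merge S (-S) (t1, t2)) = d * F (merge S (-S) (t1, t2))"
    and marg_nonzero: "marg S g t1 \<noteq> 0"
  shows "AE t2 in Leb (-S). cond_dens S g t1 t2 = cond_dens S F t1 t2"
proof -
  have marg: "marg S g t1 = d * marg S F t1"
    unfolding marg_def using proportional
    by (subst integral_cong_AE[where g="\<lambda>t2. d * F (merge S (-S) (t1, t2))"])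
       (simp_all add: measurable_Leb_section[OF g t1]
          borel_measurable_times[OF borel_measurable_const measurable_Leb_section[OF F t1]])
  with marg_nonzero have "d \<noteq> 0" by auto
  from proportional show ?thesis
    by eventually_elim (simp add: cond_dens_def marg \<open>d \<noteq> 0\<close>)
qed

lemma MAR_imp_cond_dens_eq:
  fixes g F :: "('i::finite \<Rightarrow> real) \<Rightarrow> real" and Ob S :: "'i set"
  assumes g [measurable]: "g \<in> borel_measurable (Leb UNIV)"
    and F [measurable]: "F \<in> borel_measurable (Leb UNIV)"
    and g_nonneg: "\<And>x. 0 \<le> g x" and g_le_F: "\<And>x. g x \<le> F x"
    and finite: "(\<integral>\<^sup>+ x. ennreal (F x) \<partial>Leb UNIV) \<noteq> \<infinity>" and "Ob \<subseteq> S"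
    and mar: "AE x in Leb UNIV. g x * marg Ob F (restrict x Ob) = F x * marg Ob g (restrict x Ob)"
  shows "AE t1 in Leb S. marg S g t1 > 0 \<longrightarrow>
           (AE t2 in Leb (-S). cond_dens S g t1 t2 = cond_dens S F t1 t2)"
proof -
  have F_nonneg: "F x \<ge> 0" for x using g_nonneg g_le_F order_trans by blast
  have mar_split: "AE t1 in Leb S. AE t2 in Leb (-S).
      g (merge S (-S) (t1, t2)) * marg Ob F (restrict t1 Ob)
        = F (merge S (-S) (t1, t2)) * marg Ob g (restrict t1 Ob)"
    using AE_Leb_split[OF mar, of S] by (simp add: restrict_merge_subset[OF \<open>Ob \<subseteq> S\<close>])
  from AE_space mar_split AE_marg_zero_imp_section_integral_zero[OF F F_nonneg finite \<open>Ob \<subseteq> S\<close>]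
  show ?thesis
  proof eventually_elim
    case (elim t1)
    note t1 = elim(1) and mar_t1 = elim(2) and null = elim(3)
    let ?A = "marg Ob F (restrict t1 Ob)"
    show ?case
    proof
      assume pos: "marg S g t1 > 0"
      have "?A \<noteq> 0"
      proof
        assume "?A = 0"
        then have "(\<integral>\<^sup>+ t2. ennreal (F (merge S (-S) (t1, t2))) \<partial>Leb (-S)) = 0" using null by simp
        moreover have "(\<integral>\<^sup>+ t2. ennreal (g (merge S (-S) (t1, t2))) \<partial>Leb (-S))
            \<le> (\<integral>\<^sup>+ t2. ennreal (F (merge S (-S) (t1, t2))) \<partial>Leb (-S))"
          by (intro nn_integral_mono ennreal_leI g_le_F)
        ultimately have "marg S g t1 = 0"
          by (simp add: marg_eq_enn2real[OF g g_nonneg t1])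
        with pos show False by simp
      qed
      from mar_t1 have proportional: "AE t2 in Leb (-S). g (merge S (-S) (t1, t2))
          = (marg Ob g (restrict t1 Ob) / ?A) * F (merge S (-S) (t1, t2))"
        by eventually_elim (simp add: field_simps \<open>?A \<noteq> 0\<close>)
      show "AE t2 in Leb (-S). cond_dens S g t1 t2 = cond_dens S F t1 t2"
        using pos by (intro cond_dens_eq_of_AE_section_proportional[OF g F t1 proportional]) simp
    qed
  qed
qed

lemma emeasure_pattern_eq_nn_integral:
  fixes X :: "'a \<Rightarrow> 'b" and Pat :: "'a \<Rightarrow> nat" and \<phi> :: "nat \<Rightarrow> 'b \<Rightarrow> real"
  assumes joint: "distributed M (N \<Otimes>\<^sub>M count_space UNIV) (\<lambda>\<omega>. (X \<omega>, Pat \<omega>))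
                    (\<lambda>(x, j). ennreal (\<phi> j x))"
    and A: "A \<in> sets N"
  shows "emeasure M {\<omega> \<in> space M. X \<omega> \<in> A \<and> Pat \<omega> = j}
       = (\<integral>\<^sup>+ x. ennreal (\<phi> j x) * indicator A x \<partial>N)"
proof -
  let ?NC = "N \<Otimes>\<^sub>M count_space UNIV"
  interpret count: sigma_finite_measure "count_space (UNIV::nat set)"
    by (rule sigma_finite_measure_count_space)
  have XP: "(\<lambda>\<omega>. (X \<omega>, Pat \<omega>)) \<in> M \<rightarrow>\<^sub>M ?NC"
    and dens: "distr M ?NC (\<lambda>\<omega>. (X \<omega>, Pat \<omega>)) = density ?NC (\<lambda>(x, j). ennreal (\<phi> j x))"
    and \<phi>_meas: "(\<lambda>(x, j). ennreal (\<phi> j x)) \<in> borel_measurable ?NC"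
    using joint unfolding distributed_def by auto
  have "emeasure M {\<omega> \<in> space M. X \<omega> \<in> A \<and> Pat \<omega> = j}
      = emeasure (distr M ?NC (\<lambda>\<omega>. (X \<omega>, Pat \<omega>))) (A \<times> {j})"
    using A by (subst emeasure_distr[OF XP]) (auto intro!: arg_cong[where f="emeasure M"])
  also have "\<dots> = (\<integral>\<^sup>+ w. ennreal (\<phi> (snd w) (fst w)) * indicator (A \<times> {j}) w \<partial>?NC)"
    using A \<phi>_meas by (simp add: dens emeasure_density case_prod_beta')
  also have "\<dots> = (\<integral>\<^sup>+ x. \<integral>\<^sup>+ i. ennreal (\<phi> i x) * indicator (A \<times> {j}) (x, i)
      \<partial>count_space UNIV \<partial>N)"
    using A \<phi>_meas by (subst count.nn_integral_fst[symmetric]) (auto simp: case_prod_beta')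
  also have "\<dots> = (\<integral>\<^sup>+ x. ennreal (\<phi> j x) * indicator A x \<partial>N)"
  proof (rule nn_integral_cong)
    fix x
    have "(\<lambda>i. ennreal (\<phi> i x) * indicator (A \<times> {j}) (x, i))
        = (\<lambda>i. (ennreal (\<phi> j x) * indicator A x) * indicator {j} i)"
      by (auto simp: indicator_def)
    then show "(\<integral>\<^sup>+ i. ennreal (\<phi> i x) * indicator (A \<times> {j}) (x, i) \<partial>count_space UNIV)
        = ennreal (\<phi> j x) * indicator A x"
      by simp
  qed
  finally show ?thesis .
qed

lemma distr_uniform_measure_pattern:
  fixes X :: "'a \<Rightarrow> 'b" and Pat :: "'a \<Rightarrow> nat" and \<phi> :: "nat \<Rightarrow> 'b \<Rightarrow> real"
  assumes joint: "distributed M (N \<Otimes>\<^sub>M count_space UNIV) (\<lambda>\<omega>. (X \<omega>, Pat \<omega>))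
                    (\<lambda>(x, j). ennreal (\<phi> j x))"
    and \<phi>_meas: "\<phi> j \<in> borel_measurable N"
  shows "distr (uniform_measure M {\<omega> \<in> space M. Pat \<omega> = j}) N X
       = density N (\<lambda>x. ennreal (\<phi> j x) * inverse (emeasure M {\<omega> \<in> space M. Pat \<omega> = j}))"
proof (rule measure_eqI)
  let ?C = "{\<omega> \<in> space M. Pat \<omega> = j}"
  have XP: "(\<lambda>\<omega>. (X \<omega>, Pat \<omega>)) \<in> M \<rightarrow>\<^sub>M N \<Otimes>\<^sub>M count_space UNIV"
    using joint unfolding distributed_def by auto
  have [measurable]: "X \<in> M \<rightarrow>\<^sub>M N" "Pat \<in> M \<rightarrow>\<^sub>M count_space UNIV"
    using measurable_compose[OF XP measurable_fst] measurable_compose[OF XP measurable_snd] by simp_all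
  fix A assume "A \<in> sets (distr (uniform_measure M ?C) N X)"
  then have A [measurable]: "A \<in> sets N" by simp
  have "emeasure (distr (uniform_measure M ?C) N X) A
      = emeasure (uniform_measure M ?C) (X -` A \<inter> space M)"
    by (subst emeasure_distr) simp_all
  also have "\<dots> = emeasure M (?C \<inter> (X -` A \<inter> space M)) / emeasure M ?C"
    by (rule emeasure_uniform_measure) measurable
  also have "\<dots> = emeasure M {\<omega> \<in> space M. X \<omega> \<in> A \<and> Pat \<omega> = j} / emeasure M ?C"
    by (intro arg_cong2[where f="(/)"] arg_cong[where f="emeasure M"]) auto
  also have "\<dots> = (\<integral>\<^sup>+ x. ennreal (\<phi> j x) * indicator A x \<partial>N) * inverse (emeasure M ?C)"
    by (simp add: emeasure_pattern_eq_nn_integral[OF joint A] divide_ennreal_def)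
  also have "\<dots> = emeasure (density N (\<lambda>x. ennreal (\<phi> j x) * inverse (emeasure M ?C))) A"
    using \<phi>_meas by (simp add: emeasure_density nn_integral_multc[symmetric] mult_ac)
  finally show "emeasure (distr (uniform_measure M ?C) N X) A
      = emeasure (density N (\<lambda>x. ennreal (\<phi> j x) * inverse (emeasure M ?C))) A" .
qed simp

lemma nn_integral_sum_pattern_densities_finite:
  fixes X :: "'a \<Rightarrow> 'b" and Pat :: "'a \<Rightarrow> nat" and \<phi> :: "nat \<Rightarrow> 'b \<Rightarrow> real"
  assumes "prob_space M"
    and joint: "distributed M (N \<Otimes>\<^sub>M count_space UNIV) (\<lambda>\<omega>. (X \<omega>, Pat \<omega>))
                  (\<lambda>(x, j). ennreal (\<phi> j x))"
    and \<phi>_meas: "\<And>j. \<phi> j \<in> borel_measurable N" and \<phi>_nonneg: "\<And>j x. \<phi> j x \<ge> 0"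
  shows "(\<integral>\<^sup>+ x. ennreal (\<Sum>j\<in>J. \<phi> j x) \<partial>N) \<noteq> \<infinity>"
proof -
  interpret prob_space M by fact
  have "(\<integral>\<^sup>+ x. ennreal (\<phi> j x) \<partial>N) = emeasure M {\<omega> \<in> space M. X \<omega> \<in> space N \<and> Pat \<omega> = j}"
    for j
    by (simp add: emeasure_pattern_eq_nn_integral[OF joint] cong: nn_integral_cong)
  then have finite_j: "(\<integral>\<^sup>+ x. ennreal (\<phi> j x) \<partial>N) \<noteq> \<infinity>" for j
    by (simp add: emeasure_finite)
  have "(\<integral>\<^sup>+ x. ennreal (\<Sum>j\<in>J. \<phi> j x) \<partial>N) = (\<integral>\<^sup>+ x. (\<Sum>j\<in>J. ennreal (\<phi> j x)) \<partial>N)"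
    by (simp add: sum_ennreal \<phi>_nonneg)
  also have "\<dots> = (\<Sum>j\<in>J. \<integral>\<^sup>+ x. ennreal (\<phi> j x) \<partial>N)"
    using \<phi>_meas by (intro nn_integral_sum) simp
  finally show ?thesis
    using finite_j by (cases "finite J") simp_all
qed

lemma prob_space_std_gauss: "prob_space std_gauss"
  unfolding std_gauss_def by (rule prob_space_PiM) (simp add: prob_space_normal_density)

lemma sets_std_gauss: "sets std_gauss = sets (Leb UNIV)"
  unfolding std_gauss_def Leb_def by (rule sets_PiM_cong) auto

theorem theorem1:
  fixes M :: "'a measure"
    and X :: "'a \<Rightarrow> ('i::finite \<Rightarrow> real)"
    and Pat :: "'a \<Rightarrow> nat"
    and K :: nat and k :: nat
    and obs :: "nat \<Rightarrow> 'i set"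
    and \<phi> :: "nat \<Rightarrow> ('i \<Rightarrow> real) \<Rightarrow> real"
    and Ghat :: "('i \<Rightarrow> real) \<Rightarrow> ('i \<Rightarrow> real)"
    and q :: "('i \<Rightarrow> real) \<Rightarrow> ('i \<Rightarrow> real) \<Rightarrow> real"
  assumes M: "prob_space M"
    and joint: "distributed M (Leb UNIV \<Otimes>\<^sub>M count_space UNIV) (\<lambda>\<omega>. (X \<omega>, Pat \<omega>))
                  (\<lambda>(x, j). ennreal (\<phi> j x))"
    and \<phi>_meas: "\<And>j. \<phi> j \<in> borel_measurable (Leb UNIV)"
    and \<phi>_nonneg: "\<And>j x. \<phi> j x \<ge> 0"
    and Pat_range: "AE \<omega> in M. Pat \<omega> \<in> {1..K}"
    and obs1: "obs 1 = UNIV"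
    and obs_ne: "(\<Inter>j\<in>{1..K}. obs j) \<noteq> {}"
    and mar: "MAR K (\<Inter>j\<in>{1..K}. obs j) \<phi>"
    and complete_pos: "emeasure M {\<omega> \<in> space M. Pat \<omega> = 1} > 0"
    and k: "k \<in> {2..K}"
    and Ghat_meas: "Ghat \<in> Leb UNIV \<rightarrow>\<^sub>M Leb UNIV"
    and q_meas: "(\<lambda>(t1, t2). q t1 t2) \<in> borel_measurable (Leb (obs k) \<Otimes>\<^sub>M Leb (- obs k))"
    and q_nonneg: "\<And>t1 t2. q t1 t2 \<ge> 0"
    and q_cond: "\<And>x. distr std_gauss (Leb (- obs k))
                   (\<lambda>z. restrict (gen_out Ghat (mask (obs k)) x z) (- obs k))
                 = density (Leb (- obs k)) (\<lambda>t2. ennreal (q (restrict x (obs k)) t2))"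
    and optimal: "distr (distr (uniform_measure M {\<omega> \<in> space M. Pat \<omega> = 1}) (Leb UNIV) X
                          \<Otimes>\<^sub>M std_gauss)
                    (Leb UNIV) (\<lambda>(x, z). gen_out Ghat (mask (obs k)) x z)
                  = distr (uniform_measure M {\<omega> \<in> space M. Pat \<omega> = 1}) (Leb UNIV) X"
  shows "AE t1 in Leb (obs k). marg (obs k) (\<phi> 1) t1 > 0 \<longrightarrow>
           (AE t2 in Leb (- obs k).
              q t1 t2 = cond_dens (obs k) (\<lambda>x. \<Sum>j\<in>{1..K}. \<phi> j x) t1 t2)"
proof -
  interpret prob_space M by (rule M)
  let ?C = "{\<omega> \<in> space M. Pat \<omega> = 1}"
  define Ob where "Ob = (\<Inter>j\<in>{1..K}. obs j)"
  define F where "F = (\<lambda>x. \<Sum>j\<in>{1..K}. \<phi> j x)"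
  have F_meas: "F \<in> borel_measurable (Leb UNIV)"
    unfolding F_def using \<phi>_meas by (simp add: borel_measurable_sum)
  have Ob_subset: "Ob \<subseteq> obs k" using k by (auto simp: Ob_def)
  have \<phi>1_le_F: "\<phi> 1 x \<le> F x" for x
    using k unfolding F_def by (intro member_le_sum) (auto simp: \<phi>_nonneg)
  have F_finite: "(\<integral>\<^sup>+ x. ennreal (F x) \<partial>Leb UNIV) \<noteq> \<infinity>"
    unfolding F_def by (rule nn_integral_sum_pattern_densities_finite[OF M joint \<phi>_meas \<phi>_nonneg])
  have \<phi>1_finite: "(\<integral>\<^sup>+ x. ennreal (\<phi> 1 x) \<partial>Leb UNIV) \<noteq> \<infinity>"
    using nn_integral_sum_pattern_densities_finite[OF M joint \<phi>_meas \<phi>_nonneg, of "{1}"] by simp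
  have c: "inverse (emeasure M ?C) \<noteq> 0" "inverse (emeasure M ?C) \<noteq> \<infinity>"
    using complete_pos by (simp_all add: emeasure_finite)
  have "AE t1 in Leb (obs k). marg (obs k) (\<phi> 1) t1 > 0 \<longrightarrow>
          (AE t2 in Leb (- obs k). q t1 t2 = cond_dens (obs k) (\<phi> 1) t1 t2)"
    using optimal unfolding distr_uniform_measure_pattern[OF joint \<phi>_meas]
    by (intro gen_out_invariant_imp_cond_dens[OF \<phi>_meas \<phi>_nonneg \<phi>1_finite c prob_space_std_gauss
        sets_std_gauss Ghat_meas q_meas q_nonneg q_cond])
  moreover have "AE t1 in Leb (obs k). marg (obs k) (\<phi> 1) t1 > 0 \<longrightarrow>
          (AE t2 in Leb (- obs k). cond_dens (obs k) (\<phi> 1) t1 t2 = cond_dens (obs k) F t1 t2)"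
  proof (rule MAR_imp_cond_dens_eq[OF \<phi>_meas F_meas \<phi>_nonneg \<phi>1_le_F F_finite Ob_subset])
    show "AE x in Leb UNIV. \<phi> 1 x * marg Ob F (restrict x Ob) = F x * marg Ob (\<phi> 1) (restrict x Ob)"
      using mar k unfolding MAR_def Ob_def[symmetric] by (auto simp: F_def)
  qed
  ultimately show ?thesis
    unfolding F_def[symmetric] by eventually_elim auto
qed

end
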